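(* In the setting of the context, for every $N$-tuple of integers $\mathbf{i}=(i_1,\dots,i_N)$ with $0\le i_k\le\ell_k$, define \[ V_{\mathbf{i}}=\sum_{\mathbf{n}=\mathbf{0}}^{\mathbf{i}}\mathscr{D}_{\mathbf{n},\mathbf{i}}V^{\mathbf{n}},\qquad \mathscr{D}_{\mathbf{n},\mathbf{i}}=\frac{(-1)^{|\mathbf{n}|-|\mathbf{i}|}}{(|\mathbf{i}|+|\mathbf{n}|+\omega^\star)_{|\mathbf{i}|-|\mathbf{n}|}}\prod_{p=1}^N\binom{\ell_p-n_p}{\ell_p-i_p}\big(|\mathbf{i}|_1^{p-1}+|\mathbf{n}|_1^{p}+|\boldsymbol{\ell}|_{p+1}^N-a_p+\omega^\star\big)_{i_p-n_p}. \] Then $A^\star V_{\mathbf{i}}=\theta^\star_{|\mathbf{i}|}V_{\mathbf{i}}$.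
   Context: Notation: for $N$-tuples of integers, $|\mathbf{n}|_j^k=\sum_{p=j}^k n_p$ (equal to $0$ if $j>k$), $|\mathbf{n}|=|\mathbf{n}|_1^N$, $\mathbf{e}_p$ the $p$-th unit $N$-tuple, $\mathbf{0}=(0,\dots,0)$; $(x)_k=x(x+1)\cdots(x+k-1)$, $(x)_0=1$. A sum $\sum_{\mathbf{n}=\mathbf{a}}^{\mathbf{b}}$ means the sum over all $\mathbf{n}$ with $a_p\le n_p\le b_p$ for every $p$. Setting: $N\ge1$, $\boldsymbol{\ell}=(\ell_1,\dots,\ell_N)$ nonnegative integers, $\mathcal{V}=\mathbb{C}^{\ell_1+1}\otimes\cdots\otimes\mathbb{C}^{\ell_N+1}$ with basis $V^{\mathbf{n}}$, $0\le n_p\le\ell_p$; $V^{\mathbf{n}}=0$ if some $n_p<0$ or $n_p>\ell_p$. Scalars $\theta_0,\theta_0^\star,h,h^\star,\omega,\omega^\star,a_1,\dots,a_N\in\mathbb{C}$; $\theta_i=\theta_0+hi(i+\omega)$, $\theta^\star_i=\theta^\star_0+h^\star i(i+\omega^\star)$; $\xi_{\mathbf{n},p}=h(|\mathbf{n}|_1^{p-1}+|\mathbf{n}|_1^p+|\boldsymbol{\ell}|_p^N+a_p+\omega)n_p$, $\xi^\star_{\mathbf{n},p}=h^\star(|\mathbf{n}|_1^{p-1}+|\mathbf{n}|_1^p+|\boldsymbol{\ell}|_{p+1}^N-a_p+\omega^\star)(n_p-\ell_p)$. Operators: $A V^{\mathbf{n}}=\theta_{|\mathbf{n}|}V^{\mathbf{n}}+\sum_{p=1}^N\xi_{\mathbf{n}+\mathbf{e}_p,p}V^{\mathbf{n}+\mathbf{e}_p}$,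 $A^\star V^{\mathbf{n}}=\theta^\star_{|\mathbf{n}|}V^{\mathbf{n}}+\sum_{p=1}^N\xi^\star_{\mathbf{n}-\mathbf{e}_p,p}V^{\mathbf{n}-\mathbf{e}_p}$. Standing constraints: $h,h^\star\neq0$; $\omega,\omega^\star\notin\{-2|\boldsymbol{\ell}|+1,\dots,-1\}$; for each $i$, none of $a_i,\ a_i+\omega-\omega^\star,\ a_i-|\boldsymbol{\ell}|-\omega^\star,\ a_i+|\boldsymbol{\ell}|+\omega$ lies in $\{-\ell_i,\dots,-1\}$; and with $S^\pm(\ell,a)=\{\pm(a+k+\tfrac12(\omega-\omega^\star)):k=1,\dots,\ell\}$, for all $i,j$ and signs, $S^{\epsilon_i}(\ell_i,a_i)$ and $S^{\epsilon_j}(\ell_j,a_j)$ are in general position (one contains the other or their union is not a string). *)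

theory Defs
  imports Complex_Main
begin

text \<open>N-tuples of integers are functions nat => int, indices 1..N are relevant;
  tuples are normalised to be 0 outside {1..N}.\<close>

definition tsum :: "(nat \<Rightarrow> int) \<Rightarrow> nat \<Rightarrow> nat \<Rightarrow> int" where
  "tsum n j k = (\<Sum>q\<in>{j..k}. n q)"

definition lsum :: "(nat \<Rightarrow> nat) \<Rightarrow> nat \<Rightarrow> nat \<Rightarrow> int" where
  "lsum l j k = (\<Sum>q\<in>{j..k}. int (l q))"

definition tuple_box :: "nat \<Rightarrow> (nat \<Rightarrow> int) \<Rightarrow> (nat \<Rightarrow> int) \<Rightarrow> (nat \<Rightarrow> int) set" where
  "tuple_box N lo hi = {n. (\<forall>p\<in>{1..N}. lo p \<le> n p \<and> n p \<le> hi p) \<and> (\<forall>p. p \<notin> {1..N} \<longrightarrow> n p = 0)}"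

definition valid_idx :: "nat \<Rightarrow> (nat \<Rightarrow> nat) \<Rightarrow> (nat \<Rightarrow> int) set" where
  "valid_idx N l = tuple_box N (\<lambda>_. 0) (\<lambda>p. int (l p))"

definition unit_tuple :: "nat \<Rightarrow> nat \<Rightarrow> int" where
  "unit_tuple p = (\<lambda>q. if q = p then 1 else 0)"

text \<open>Vectors of V are coordinate functions on tuples (supported on valid_idx).
  basisV n is V^n, which is 0 if n is out of range.\<close>

definition basisV :: "nat \<Rightarrow> (nat \<Rightarrow> nat) \<Rightarrow> (nat \<Rightarrow> int) \<Rightarrow> (nat \<Rightarrow> int) \<Rightarrow> complex" where
  "basisV N l n = (\<lambda>m. if n \<in> valid_idx N l \<and> m = n then 1 else 0)"

definition theta_seq :: "complex \<Rightarrow> complex \<Rightarrow> complex \<Rightarrow> int \<Rightarrow> complex" where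
  "theta_seq t0 h w k = t0 + h * of_int k * (of_int k + w)"

definition xi_star :: "nat \<Rightarrow> (nat \<Rightarrow> nat) \<Rightarrow> complex \<Rightarrow> complex \<Rightarrow> (nat \<Rightarrow> complex)
    \<Rightarrow> (nat \<Rightarrow> int) \<Rightarrow> nat \<Rightarrow> complex" where
  "xi_star N l hs ws a n p =
     hs * (of_int (tsum n 1 (p - 1) + tsum n 1 p + lsum l (p + 1) N) - a p + ws)
        * of_int (n p - int (l p))"

definition Astar_basis :: "nat \<Rightarrow> (nat \<Rightarrow> nat) \<Rightarrow> complex \<Rightarrow> complex \<Rightarrow> complex \<Rightarrow> (nat \<Rightarrow> complex)
    \<Rightarrow> (nat \<Rightarrow> int) \<Rightarrow> (nat \<Rightarrow> int) \<Rightarrow> complex" where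
  "Astar_basis N l ts0 hs ws a n =
     (\<lambda>m. theta_seq ts0 hs ws (tsum n 1 N) * basisV N l n m
        + (\<Sum>p\<in>{1..N}. xi_star N l hs ws a (n - unit_tuple p) p * basisV N l (n - unit_tuple p) m))"

definition Astar :: "nat \<Rightarrow> (nat \<Rightarrow> nat) \<Rightarrow> complex \<Rightarrow> complex \<Rightarrow> complex \<Rightarrow> (nat \<Rightarrow> complex)
    \<Rightarrow> ((nat \<Rightarrow> int) \<Rightarrow> complex) \<Rightarrow> (nat \<Rightarrow> int) \<Rightarrow> complex" where
  "Astar N l ts0 hs ws a v =
     (\<lambda>m. \<Sum>n\<in>valid_idx N l. v n * Astar_basis N l ts0 hs ws a n m)"

definition Dcoef :: "nat \<Rightarrow> (nat \<Rightarrow> nat) \<Rightarrow> complex \<Rightarrow> (nat \<Rightarrow> complex)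
    \<Rightarrow> (nat \<Rightarrow> int) \<Rightarrow> (nat \<Rightarrow> int) \<Rightarrow> complex" where
  "Dcoef N l ws a n i =
     (-1) powi (tsum n 1 N - tsum i 1 N)
     / pochhammer (of_int (tsum i 1 N + tsum n 1 N) + ws) (nat (tsum i 1 N - tsum n 1 N))
     * (\<Prod>p\<in>{1..N}.
          of_nat (nat (int (l p) - n p) choose nat (int (l p) - i p))
          * pochhammer (of_int (tsum i 1 (p - 1) + tsum n 1 p + lsum l (p + 1) N) - a p + ws)
                       (nat (i p - n p)))"

definition Vvec :: "nat \<Rightarrow> (nat \<Rightarrow> nat) \<Rightarrow> complex \<Rightarrow> (nat \<Rightarrow> complex)
    \<Rightarrow> (nat \<Rightarrow> int) \<Rightarrow> (nat \<Rightarrow> int) \<Rightarrow> complex" where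
  "Vvec N l ws a i =
     (\<lambda>m. \<Sum>n\<in>tuple_box N (\<lambda>_. 0) i. Dcoef N l ws a n i * basisV N l n m)"

definition is_string :: "complex set \<Rightarrow> bool" where
  "is_string S \<longleftrightarrow> (\<exists>z m. S = {z + of_nat k | k. k \<le> m})"

definition Sset :: "complex \<Rightarrow> nat \<Rightarrow> complex \<Rightarrow> complex \<Rightarrow> complex \<Rightarrow> complex set" where
  "Sset eps ll a w ws = {eps * (a + of_nat k + (w - ws) / 2) | k. 1 \<le> k \<and> k \<le> ll}"

definition general_position :: "complex set \<Rightarrow> complex set \<Rightarrow> bool" where
  "general_position S T \<longleftrightarrow> S \<subseteq> T \<or> T \<subseteq> S \<or> \<not> is_string (S \<union> T)"

end

theory Submission
  imports Defs "HOL-Library.FuncSet"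
begin

text \<open>Write D(n,i) = c(|n|) P(n), where the prefactor c depends on n only through |n| and
  P(n) is the product of binomial-Pochhammer factors. For m \<le> i the coordinate of A* V_i at
  V^m is \<theta>*(|m|) c(|m|) P(m) + c(|m|+1) \<Sum>_p \<xi>*(m,p) P(m+e_p), and this sum telescopes to
  -h*(|i|-|m|) P(m): by binomial absorption and (u-D) d (u+1)_(d-1) = (D+d) (u)_d - D (u+1)_d,
  its p-th term is the difference of two consecutive interpolants, in which the first p
  Pochhammer bases are those of m and the remaining ones are shifted by one. What is left is
  \<theta>*(|i|) - \<theta>*(|m|) = h*(|i|-|m|)(|i|+|m|+\<omega>*) together with (s)_k = s (s+1)_(k-1) for
  s = |i|+|m|+\<omega>*, which needs s \<noteq> 0. This is the only place where a standing constraint,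
  the one on \<omega>*, is used.\<close>

abbreviation tuple_incr :: "(nat \<Rightarrow> int) \<Rightarrow> nat \<Rightarrow> nat \<Rightarrow> int" where
  "tuple_incr m p \<equiv> \<lambda>x. m x + unit_tuple p x"

lemma finite_tuple_box: "finite (tuple_box N lo hi)"
proof (rule finite_subset)
  show "tuple_box N lo hi
      \<subseteq> (\<lambda>f p. if p \<in> {1..N} then f p else 0) ` PiE {1..N} (\<lambda>p. {lo p..hi p})"
  proof
    fix n assume "n \<in> tuple_box N lo hi"
    then show "n \<in> (\<lambda>f p. if p \<in> {1..N} then f p else 0) ` PiE {1..N} (\<lambda>p. {lo p..hi p})"
      by (intro image_eqI[of _ _ "restrict n {1..N}"]) (auto simp: tuple_box_def fun_eq_iff PiE_iff)
  qed
qed (simp add: finite_PiE)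

lemma tuple_box_subset_valid_idx:
  "i \<in> valid_idx N l \<Longrightarrow> tuple_box N (\<lambda>_. 0) i \<subseteq> valid_idx N l"
  by (force simp: valid_idx_def tuple_box_def)

lemma mem_tuple_box_if_tuple_incr_mem:
  assumes m: "m \<in> valid_idx N l" and incr: "tuple_incr m p \<in> tuple_box N (\<lambda>_. 0) i"
  shows "m \<in> tuple_box N (\<lambda>_. 0) i"
proof -
  have "0 \<le> m q \<and> m q \<le> i q" if q: "q \<in> {1..N}" for q
  proof -
    have "m q + unit_tuple p q \<le> i q"
      using incr q by (simp add: tuple_box_def)
    moreover have "0 \<le> m q"
      using m q by (simp add: valid_idx_def tuple_box_def)
    ultimately show ?thesis
      by (simp add: unit_tuple_def split: if_splits)
  qed
  moreover have "m q = 0" if "q \<notin> {1..N}" for q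
    using m that by (simp add: valid_idx_def tuple_box_def)
  ultimately show ?thesis
    by (simp add: tuple_box_def)
qed

lemma tsum_1_last: "1 \<le> p \<Longrightarrow> tsum x 1 p = tsum x 1 (p - 1) + x p"
  unfolding tsum_def by (cases p) (auto simp: sum.cl_ivl_Suc)

lemma tsum_tuple_incr: "1 \<le> p \<Longrightarrow> tsum (tuple_incr m p) 1 q = tsum m 1 q + of_bool (p \<le> q)"
  by (simp add: tsum_def unit_tuple_def sum.distrib)

lemma tsum_mono: "(\<And>q. q \<in> {1..N} \<Longrightarrow> x q \<le> y q) \<Longrightarrow> tsum x 1 N \<le> tsum y 1 N"
  unfolding tsum_def by (rule sum_mono)

lemma pochhammer_telescope_step:
  fixes u D :: "'a::comm_ring_1"
  shows "(u - D) * of_nat d * pochhammer (u + 1) (d - 1)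
           = (D + of_nat d) * pochhammer u d - D * pochhammer (u + 1) d"
proof (cases d)
  case (Suc e)
  then show ?thesis
    by (simp only: pochhammer_rec'[of "u + 1"] pochhammer_rec[of u]) (simp add: algebra_simps)
qed simp

lemma binomial_absorb_comp_int:
  assumes "m \<le> i" and "i \<le> L"
  shows "of_int (m - L) * (of_nat (nat (L - (m + 1)) choose nat (L - i)) :: 'a::comm_ring_1)
           = - of_nat (nat (i - m)) * of_nat (nat (L - m) choose nat (L - i))"
proof -
  define n where "n = nat (L - m)"
  define k where "k = nat (L - i)"
  have n_pred: "n - 1 = nat (L - (m + 1))"
    by (simp add: n_def)
  have "of_int (m - L) = - (of_nat n :: 'a)"
    using assms by (simp add: n_def)
  then have "of_int (m - L) * (of_nat (nat (L - (m + 1)) choose nat (L - i)) :: 'a)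
      = - (of_nat n * of_nat ((n - 1) choose k))"
    unfolding n_pred k_def by simp
  also have "\<dots> = - (of_nat (n - k) * of_nat (n choose k))"
    by (simp only: of_nat_mult[symmetric] binomial_absorb_comp)
  also have "\<dots> = - of_nat (nat (i - m)) * of_nat (nat (L - m) choose nat (L - i))"
    using assms by (simp add: n_def k_def nat_diff_distrib' algebra_simps)
  finally show ?thesis .
qed

definition D_prefactor :: "int \<Rightarrow> int \<Rightarrow> complex \<Rightarrow> complex" where
  "D_prefactor I M ws = (-1) powi (M - I) / pochhammer (of_int (I + M) + ws) (nat (I - M))"

definition D_base :: "nat \<Rightarrow> (nat \<Rightarrow> nat) \<Rightarrow> complex \<Rightarrow> (nat \<Rightarrow> complex)
    \<Rightarrow> (nat \<Rightarrow> int) \<Rightarrow> (nat \<Rightarrow> int) \<Rightarrow> nat \<Rightarrow> complex" where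
  "D_base N l ws a n i p = of_int (tsum i 1 (p - 1) + tsum n 1 p + lsum l (p + 1) N) - a p + ws"

definition D_factor :: "nat \<Rightarrow> (nat \<Rightarrow> nat) \<Rightarrow> complex \<Rightarrow> (nat \<Rightarrow> complex)
    \<Rightarrow> (nat \<Rightarrow> int) \<Rightarrow> (nat \<Rightarrow> int) \<Rightarrow> nat \<Rightarrow> complex" where
  "D_factor N l ws a n i p = of_nat (nat (int (l p) - n p) choose nat (int (l p) - i p))
     * pochhammer (D_base N l ws a n i p) (nat (i p - n p))"

definition D_product :: "nat \<Rightarrow> (nat \<Rightarrow> nat) \<Rightarrow> complex \<Rightarrow> (nat \<Rightarrow> complex)
    \<Rightarrow> (nat \<Rightarrow> int) \<Rightarrow> (nat \<Rightarrow> int) \<Rightarrow> complex" where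
  "D_product N l ws a n i = (\<Prod>p\<in>{1..N}. D_factor N l ws a n i p)"

lemma Dcoef_eq_D_prefactor_D_product:
  "Dcoef N l ws a n i = D_prefactor (tsum i 1 N) (tsum n 1 N) ws * D_product N l ws a n i"
  by (simp add: Dcoef_def D_prefactor_def D_product_def D_factor_def D_base_def)

lemma D_base_tuple_incr:
  "1 \<le> p \<Longrightarrow> D_base N l ws a (tuple_incr m p) i q = D_base N l ws a m i q + of_bool (p \<le> q)"
  using tsum_tuple_incr[of p m] by (simp add: D_base_def)

text \<open>Interpolates between 0 (r = 0) and (|i| - |m|) P(m) (r = N); the factors q > r carry the
  Pochhammer bases of m + e_p for p \<le> r.\<close>

definition D_interpolant :: "nat \<Rightarrow> (nat \<Rightarrow> nat) \<Rightarrow> complex \<Rightarrow> (nat \<Rightarrow> complex)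
    \<Rightarrow> (nat \<Rightarrow> int) \<Rightarrow> (nat \<Rightarrow> int) \<Rightarrow> nat \<Rightarrow> complex" where
  "D_interpolant N l ws a m i r = of_int (tsum i 1 r - tsum m 1 r) * (\<Prod>q\<in>{1..N}.
     of_nat (nat (int (l q) - m q) choose nat (int (l q) - i q))
     * pochhammer (D_base N l ws a m i q + of_bool (r < q)) (nat (i q - m q)))"

lemma D_interpolant_0: "D_interpolant N l ws a m i 0 = 0"
  by (simp add: D_interpolant_def tsum_def)

lemma D_interpolant_N:
  "D_interpolant N l ws a m i N = of_int (tsum i 1 N - tsum m 1 N) * D_product N l ws a m i"
  unfolding D_interpolant_def D_product_def D_factor_def by (intro arg_cong2[where f = "(*)"] prod.cong) auto

lemma xi_star_mult_D_product_incr: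
  assumes p: "p \<in> {1..N}" and mi: "m p \<le> i p" and il: "i p \<le> int (l p)"
  shows "xi_star N l hs ws a m p * D_product N l ws a (tuple_incr m p) i
           = - hs * (D_interpolant N l ws a m i p - D_interpolant N l ws a m i (p - 1))"
proof -
  define c where "c q = (of_nat (nat (int (l q) - m q) choose nat (int (l q) - i q)) :: complex)" for q
  define c' where "c' = (of_nat (nat (int (l p) - (m p + 1)) choose nat (int (l p) - i p)) :: complex)"
  define F where "F r q = c q * pochhammer (D_base N l ws a m i q + of_bool (r < q)) (nat (i q - m q))"
    for r q
  define R where "R = (\<Prod>q\<in>{1..N} - {p}. F p q)"
  define u where "u = D_base N l ws a m i p"
  define d where "d = nat (i p - m p)"
  define \<Delta> where "\<Delta> r = (of_int (tsum i 1 r - tsum m 1 r) :: complex)" for r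
  have p1: "1 \<le> p" using p by simp
  have prod_split: "(\<Prod>q\<in>{1..N}. f q) = f p * (\<Prod>q\<in>{1..N} - {p}. f q)"
    for f :: "nat \<Rightarrow> complex"
    using p by (simp add: prod.remove)
  have incr: "D_product N l ws a (tuple_incr m p) i = c' * pochhammer (u + 1) (d - 1) * R"
  proof -
    have "nat (i p - (m p + 1)) = d - 1"
      by (simp add: d_def)
    then have "D_factor N l ws a (tuple_incr m p) i p = c' * pochhammer (u + 1) (d - 1)"
      unfolding D_factor_def D_base_tuple_incr[OF p1] by (simp add: unit_tuple_def u_def c'_def)
    moreover have "D_factor N l ws a (tuple_incr m p) i q = F p q" if "q \<noteq> p" for q
    proof -
      have "of_bool (p \<le> q) = (of_bool (p < q) :: complex)" using that by auto
      then show ?thesis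
        unfolding D_factor_def D_base_tuple_incr[OF p1] using that by (simp add: unit_tuple_def F_def c_def)
    qed
    ultimately show ?thesis
      unfolding D_product_def prod_split R_def by simp
  qed
  have interpolant:
    "D_interpolant N l ws a m i r = \<Delta> r * (F r p * (\<Prod>q\<in>{1..N} - {p}. F r q))" for r
    unfolding D_interpolant_def \<Delta>_def prod_split[symmetric] by (simp add: F_def c_def)
  have "(\<Prod>q\<in>{1..N} - {p}. F (p - 1) q) = R"
    unfolding R_def F_def using p1 by (intro prod.cong) auto
  then have interpolant_p: "D_interpolant N l ws a m i p = \<Delta> p * (c p * pochhammer u d) * R"
    and interpolant_pred:
      "D_interpolant N l ws a m i (p - 1) = \<Delta> (p - 1) * (c p * pochhammer (u + 1) d) * R"
    unfolding interpolant R_def using p1 by (simp_all add: F_def u_def d_def)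
  have xi: "xi_star N l hs ws a m p = hs * (u - \<Delta> (p - 1)) * of_int (m p - int (l p))"
    unfolding xi_star_def u_def \<Delta>_def D_base_def by (simp add: algebra_simps)
  have \<Delta>_p: "\<Delta> p = \<Delta> (p - 1) + of_nat d"
    using mi tsum_1_last[OF p1, of i] tsum_1_last[OF p1, of m] by (simp add: \<Delta>_def d_def)
  have binom: "of_int (m p - int (l p)) * c' = - of_nat d * c p"
    unfolding c_def c'_def d_def by (rule binomial_absorb_comp_int[OF mi il])
  have "xi_star N l hs ws a m p * D_product N l ws a (tuple_incr m p) i
      = hs * (u - \<Delta> (p - 1)) * (of_int (m p - int (l p)) * c') * pochhammer (u + 1) (d - 1) * R"
    by (simp add: xi incr mult_ac)
  also have "\<dots> = - hs * c p * ((u - \<Delta> (p - 1)) * of_nat d * pochhammer (u + 1) (d - 1)) * R"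
    unfolding binom by (simp add: mult_ac)
  also have "\<dots> = - hs * c p * ((\<Delta> (p - 1) + of_nat d) * pochhammer u d
                                  - \<Delta> (p - 1) * pochhammer (u + 1) d) * R"
    by (simp only: pochhammer_telescope_step)
  also have "\<dots> = - hs * (D_interpolant N l ws a m i p - D_interpolant N l ws a m i (p - 1))"
    unfolding interpolant_p interpolant_pred \<Delta>_p by (simp add: algebra_simps)
  finally show ?thesis .
qed

lemma xi_star_mult_D_product_incr_eq_0:
  assumes p: "p \<in> {1..N}" and mi: "m p = i p" and il: "i p \<le> int (l p)"
  shows "xi_star N l hs ws a m p * D_product N l ws a (tuple_incr m p) i = 0"
proof -
  have "of_int (m p - int (l p))
      * (of_nat (nat (int (l p) - (m p + 1)) choose nat (int (l p) - i p)) :: complex) = 0"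
    using binomial_absorb_comp_int[of "m p" "i p" "int (l p)", where 'a = complex] mi il by simp
  then have factor_0: "of_int (m p - int (l p)) * D_factor N l ws a (tuple_incr m p) i p = 0"
    using mi by (simp add: D_factor_def unit_tuple_def)
  have "xi_star N l hs ws a m p * D_product N l ws a (tuple_incr m p) i
      = hs * (of_int (tsum m 1 (p - 1) + tsum m 1 p + lsum l (p + 1) N) - a p + ws)
          * (\<Prod>q\<in>{1..N} - {p}. D_factor N l ws a (tuple_incr m p) i q)
          * (of_int (m p - int (l p)) * D_factor N l ws a (tuple_incr m p) i p)"
    unfolding xi_star_def D_product_def prod.remove[OF finite_atLeastAtMost p] by (simp only: ac_simps)
  also have "\<dots> = 0"
    by (simp only: factor_0 mult_zero_right)
  finally show ?thesis .
qed

lemma sum_xi_star_mult_D_product_incr: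
  assumes "\<And>q. q \<in> {1..N} \<Longrightarrow> m q \<le> i q \<and> i q \<le> int (l q)"
  shows "(\<Sum>p\<in>{1..N}. xi_star N l hs ws a m p * D_product N l ws a (tuple_incr m p) i)
           = - hs * of_int (tsum i 1 N - tsum m 1 N) * D_product N l ws a m i"
proof -
  have "(\<Sum>p\<in>{1..N}. xi_star N l hs ws a m p * D_product N l ws a (tuple_incr m p) i)
      = (\<Sum>p\<in>{1..N}. - hs * (D_interpolant N l ws a m i p - D_interpolant N l ws a m i (p - 1)))"
    using assms by (intro sum.cong refl xi_star_mult_D_product_incr) auto
  also have "\<dots> = - hs
      * (\<Sum>p\<in>{1..N}. D_interpolant N l ws a m i p - D_interpolant N l ws a m i (p - 1))"
    by (simp only: sum_distrib_left)
  also have "\<dots> = - hs * (D_interpolant N l ws a m i N - D_interpolant N l ws a m i 0)"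
    using sum_telescope''[of 0 N "D_interpolant N l ws a m i"] by simp
  finally show ?thesis
    by (simp add: D_interpolant_0 D_interpolant_N)
qed

lemma theta_seq_mult_D_prefactor:
  assumes "M \<le> I" and "M < I \<Longrightarrow> of_int (I + M) + ws \<noteq> 0"
  shows "theta_seq ts0 hs ws M * D_prefactor I M ws - hs * of_int (I - M) * D_prefactor I (M + 1) ws
           = theta_seq ts0 hs ws I * D_prefactor I M ws"
proof (cases "M = I")
  case False
  define s where "s = of_int (I + M) + ws"
  define E where "E = (-1 :: complex) powi (M - I)"
  obtain k where k: "nat (I - M) = Suc k"
    using False assms(1) by (metis gr0_implies_Suc zero_less_nat_eq diff_gt_0_iff_gt order_le_neq_trans)
  have s: "s \<noteq> 0"
    using assms False by (simp add: s_def)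
  have prefactor_M: "D_prefactor I M ws = E / (s * pochhammer (s + 1) k)"
    by (simp add: D_prefactor_def k pochhammer_rec s_def E_def)
  have "(-1 :: complex) powi ((M - I) + 1) = - E"
    unfolding E_def by (subst power_int_add_1) auto
  then have sign: "(-1 :: complex) powi (M + 1 - I) = - E"
    by (simp only: diff_add_eq)
  have length: "nat (I - (M + 1)) = k" and base: "of_int (I + (M + 1)) + ws = s + 1"
    using k by (simp_all add: s_def)
  have prefactor_succ: "D_prefactor I (M + 1) ws = - (E / pochhammer (s + 1) k)"
    unfolding D_prefactor_def sign length base by simp
  have theta_diff: "theta_seq ts0 hs ws I - theta_seq ts0 hs ws M = hs * of_int (I - M) * s"
    by (simp add: theta_seq_def s_def algebra_simps)
  have "s * D_prefactor I M ws = E / pochhammer (s + 1) k"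
    using s by (simp add: prefactor_M)
  then have "theta_seq ts0 hs ws M * D_prefactor I M ws - hs * of_int (I - M) * D_prefactor I (M + 1) ws
      = theta_seq ts0 hs ws M * D_prefactor I M ws + hs * of_int (I - M) * s * D_prefactor I M ws"
    by (simp add: prefactor_succ mult.assoc)
  also have "\<dots> = theta_seq ts0 hs ws I * D_prefactor I M ws"
    unfolding theta_diff[symmetric] by (simp add: algebra_simps)
  finally show ?thesis .
qed simp

lemma Dcoef_incr_recurrence:
  assumes i: "i \<in> valid_idx N l" and m: "m \<in> tuple_box N (\<lambda>_. 0) i"
    and base_nz: "tsum m 1 N < tsum i 1 N \<Longrightarrow> of_int (tsum i 1 N + tsum m 1 N) + ws \<noteq> 0"
  shows "theta_seq ts0 hs ws (tsum m 1 N) * Dcoef N l ws a m i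
           + (\<Sum>p\<in>{1..N}. xi_star N l hs ws a m p * Dcoef N l ws a (tuple_incr m p) i)
         = theta_seq ts0 hs ws (tsum i 1 N) * Dcoef N l ws a m i"
proof -
  let ?I = "tsum i 1 N" and ?M = "tsum m 1 N"
  have bounds: "m q \<le> i q \<and> i q \<le> int (l q)" if "q \<in> {1..N}" for q
    using i m that by (auto simp: valid_idx_def tuple_box_def)
  have "?M \<le> ?I"
    using bounds by (intro tsum_mono) auto
  have "Dcoef N l ws a (tuple_incr m p) i = D_prefactor ?I (?M + 1) ws * D_product N l ws a (tuple_incr m p) i"
    if "p \<in> {1..N}" for p
    using that tsum_tuple_incr[of p m N] by (simp add: Dcoef_eq_D_prefactor_D_product)
  then have "(\<Sum>p\<in>{1..N}. xi_star N l hs ws a m p * Dcoef N l ws a (tuple_incr m p) i)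
      = D_prefactor ?I (?M + 1) ws
          * (\<Sum>p\<in>{1..N}. xi_star N l hs ws a m p * D_product N l ws a (tuple_incr m p) i)"
    by (simp add: sum_distrib_left mult_ac)
  also have "\<dots> = - hs * of_int (?I - ?M) * D_prefactor ?I (?M + 1) ws * D_product N l ws a m i"
    using sum_xi_star_mult_D_product_incr[of N m i l, OF bounds] by (simp add: mult_ac)
  finally have sum: "(\<Sum>p\<in>{1..N}. xi_star N l hs ws a m p * Dcoef N l ws a (tuple_incr m p) i)
      = - hs * of_int (?I - ?M) * D_prefactor ?I (?M + 1) ws * D_product N l ws a m i" .
  have "theta_seq ts0 hs ws ?M * Dcoef N l ws a m i
        + (\<Sum>p\<in>{1..N}. xi_star N l hs ws a m p * Dcoef N l ws a (tuple_incr m p) i)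
      = (theta_seq ts0 hs ws ?M * D_prefactor ?I ?M ws - hs * of_int (?I - ?M) * D_prefactor ?I (?M + 1) ws)
          * D_product N l ws a m i"
    unfolding sum by (simp add: Dcoef_eq_D_prefactor_D_product algebra_simps)
  also have "\<dots> = theta_seq ts0 hs ws ?I * Dcoef N l ws a m i"
    using theta_seq_mult_D_prefactor[OF \<open>?M \<le> ?I\<close> base_nz]
    by (simp add: Dcoef_eq_D_prefactor_D_product)
  finally show ?thesis .
qed

lemma Astar_apply:
  "Astar N l ts0 hs ws a v m =
     (if m \<in> valid_idx N l then
        theta_seq ts0 hs ws (tsum m 1 N) * v m
        + (\<Sum>p\<in>{1..N}. if tuple_incr m p \<in> valid_idx N l
                         then xi_star N l hs ws a m p * v (tuple_incr m p) else 0)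
      else 0)"
proof -
  let ?V = "valid_idx N l"
  have fin: "finite ?V"
    unfolding valid_idx_def by (rule finite_tuple_box)
  have "(\<Sum>n\<in>?V. v n * (theta_seq ts0 hs ws (tsum n 1 N) * basisV N l n m))
      = (\<Sum>n\<in>?V. if n = m then theta_seq ts0 hs ws (tsum m 1 N) * v m else 0)"
    by (rule sum.cong) (auto simp: basisV_def)
  then have diagonal: "(\<Sum>n\<in>?V. v n * (theta_seq ts0 hs ws (tsum n 1 N) * basisV N l n m))
      = (if m \<in> ?V then theta_seq ts0 hs ws (tsum m 1 N) * v m else 0)"
    using fin by (simp add: sum.delta')
  have shifted: "(\<Sum>n\<in>?V. v n
        * (xi_star N l hs ws a (n - unit_tuple p) p * basisV N l (n - unit_tuple p) m))
      = (if m \<in> ?V \<and> tuple_incr m p \<in> ?V then xi_star N l hs ws a m p * v (tuple_incr m p) else 0)" for p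
  proof -
    have "m = n - unit_tuple p \<longleftrightarrow> n = tuple_incr m p" for n
      by (auto simp: fun_eq_iff)
    moreover have "tuple_incr m p - unit_tuple p = m"
      by (simp add: fun_eq_iff)
    ultimately have "(\<Sum>n\<in>?V. v n
        * (xi_star N l hs ws a (n - unit_tuple p) p * basisV N l (n - unit_tuple p) m))
        = (\<Sum>n\<in>?V. if n = tuple_incr m p
                     then (if m \<in> ?V then xi_star N l hs ws a m p * v (tuple_incr m p) else 0) else 0)"
      by (intro sum.cong) (auto simp: basisV_def)
    then show ?thesis
      using fin by (simp add: sum.delta')
  qed
  have "Astar N l ts0 hs ws a v m
      = (\<Sum>n\<in>?V. v n * (theta_seq ts0 hs ws (tsum n 1 N) * basisV N l n m))
        + (\<Sum>p\<in>{1..N}. \<Sum>n\<in>?V. v n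
             * (xi_star N l hs ws a (n - unit_tuple p) p * basisV N l (n - unit_tuple p) m))"
    unfolding Astar_def Astar_basis_def
    by (simp add: distrib_left sum.distrib sum_distrib_left sum.swap[where A = ?V])
  then show ?thesis
    using diagonal shifted by simp
qed

lemma Vvec_apply:
  assumes "i \<in> valid_idx N l"
  shows "Vvec N l ws a i m = (if m \<in> tuple_box N (\<lambda>_. 0) i then Dcoef N l ws a m i else 0)"
proof -
  have "Vvec N l ws a i m = (\<Sum>n\<in>tuple_box N (\<lambda>_. 0) i. if n = m then Dcoef N l ws a m i else 0)"
    unfolding Vvec_def using tuple_box_subset_valid_idx[OF assms] by (intro sum.cong) (auto simp: basisV_def)
  then show ?thesis
    using finite_tuple_box by (simp add: sum.delta')
qed

lemma Astar_Vvec_apply_outside_box: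
  assumes i: "i \<in> valid_idx N l" and m: "m \<notin> tuple_box N (\<lambda>_. 0) i"
  shows "Astar N l ts0 hs ws a (Vvec N l ws a i) m = 0"
proof (cases "m \<in> valid_idx N l")
  case True
  then have "tuple_incr m p \<notin> tuple_box N (\<lambda>_. 0) i" for p
    using m mem_tuple_box_if_tuple_incr_mem by blast
  then show ?thesis
    using m by (simp add: Astar_apply Vvec_apply[OF i] cong: if_cong)
qed (simp add: Astar_apply)

lemma Astar_Vvec_apply_in_box:
  assumes i: "i \<in> valid_idx N l" and m: "m \<in> tuple_box N (\<lambda>_. 0) i"
  shows "Astar N l ts0 hs ws a (Vvec N l ws a i) m
           = theta_seq ts0 hs ws (tsum m 1 N) * Dcoef N l ws a m i
             + (\<Sum>p\<in>{1..N}. xi_star N l hs ws a m p * Dcoef N l ws a (tuple_incr m p) i)"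
proof -
  let ?B = "tuple_box N (\<lambda>_. 0) i"
  have box_valid: "?B \<subseteq> valid_idx N l"
    using i by (rule tuple_box_subset_valid_idx)
  have bounds: "0 \<le> m q \<and> m q \<le> i q \<and> i q \<le> int (l q)" if "q \<in> {1..N}" for q
    using i m that by (auto simp: valid_idx_def tuple_box_def)
  have "(if tuple_incr m p \<in> valid_idx N l
         then xi_star N l hs ws a m p * Vvec N l ws a i (tuple_incr m p) else 0)
      = xi_star N l hs ws a m p * Dcoef N l ws a (tuple_incr m p) i" if p: "p \<in> {1..N}" for p
  proof (cases "m p < i p")
    case True
    then have "tuple_incr m p \<in> ?B"
      using m p by (auto simp: tuple_box_def unit_tuple_def)
    then show ?thesis
      using box_valid by (auto simp: Vvec_apply[OF i])
  next
    case False
    then have "m p = i p"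
      using bounds[OF p] by simp
    then have "xi_star N l hs ws a m p * D_product N l ws a (tuple_incr m p) i = 0"
      using bounds[OF p] by (intro xi_star_mult_D_product_incr_eq_0[OF p]) auto
    moreover have "tuple_incr m p \<notin> ?B"
      using False p by (auto simp: tuple_box_def unit_tuple_def)
    ultimately show ?thesis
      by (auto simp: Vvec_apply[OF i] Dcoef_eq_D_prefactor_D_product)
  qed
  then show ?thesis
    using m box_valid by (auto simp: Astar_apply Vvec_apply[OF i] intro!: sum.cong)
qed

lemma D_prefactor_base_nonzero:
  assumes ws_ok: "\<forall>k::nat. 1 \<le> k \<and> k \<le> 2 * nat (lsum l 1 N) - 1 \<longrightarrow> ws \<noteq> - of_nat k"
    and i: "i \<in> valid_idx N l" and m: "m \<in> tuple_box N (\<lambda>_. 0) i"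
    and less: "tsum m 1 N < tsum i 1 N"
  shows "of_int (tsum i 1 N + tsum m 1 N) + ws \<noteq> 0"
proof
  let ?I = "tsum i 1 N" and ?M = "tsum m 1 N"
  assume base_0: "of_int (?I + ?M) + ws = 0"
  have "0 \<le> ?M"
    using m by (auto simp: tsum_def tuple_box_def intro!: sum_nonneg)
  moreover have "?I \<le> lsum l 1 N"
    using i by (auto simp: tsum_def lsum_def valid_idx_def tuple_box_def intro!: sum_mono)
  ultimately have "1 \<le> nat (?I + ?M) \<and> nat (?I + ?M) \<le> 2 * nat (lsum l 1 N) - 1"
    using less by linarith
  moreover have "ws = - of_nat (nat (?I + ?M))"
    using base_0 \<open>0 \<le> ?M\<close> less by (simp add: add_eq_0_iff)
  ultimately show False
    using ws_ok by blast
qed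

theorem mainTheorem4:
  fixes N :: nat and l :: "nat \<Rightarrow> nat"
    and t0 ts0 h hs w ws :: complex and a :: "nat \<Rightarrow> complex"
    and i :: "nat \<Rightarrow> int"
  assumes N1: "N \<ge> 1"
    and h_nz: "h \<noteq> 0" and hs_nz: "hs \<noteq> 0"
    and w_ok: "\<forall>k::nat. 1 \<le> k \<and> k \<le> 2 * nat (lsum l 1 N) - 1 \<longrightarrow> w \<noteq> - of_nat k"
    and ws_ok: "\<forall>k::nat. 1 \<le> k \<and> k \<le> 2 * nat (lsum l 1 N) - 1 \<longrightarrow> ws \<noteq> - of_nat k"
    and a_ok: "\<forall>p\<in>{1..N}. \<forall>k::nat. 1 \<le> k \<and> k \<le> l p \<longrightarrow>
                 a p \<noteq> - of_nat k \<and> a p + w - ws \<noteq> - of_nat k \<and>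
                 a p - of_int (lsum l 1 N) - ws \<noteq> - of_nat k \<and>
                 a p + of_int (lsum l 1 N) + w \<noteq> - of_nat k"
    and gen_pos: "\<forall>p\<in>{1..N}. \<forall>q\<in>{1..N}. \<forall>e1\<in>{1, -1}. \<forall>e2\<in>{1, -1}.
                 general_position (Sset e1 (l p) (a p) w ws) (Sset e2 (l q) (a q) w ws)"
    and i_valid: "i \<in> valid_idx N l"
  shows "Astar N l ts0 hs ws a (Vvec N l ws a i)
           = (\<lambda>m. theta_seq ts0 hs ws (tsum i 1 N) * Vvec N l ws a i m)"
proof
  fix m
  show "Astar N l ts0 hs ws a (Vvec N l ws a i) m = theta_seq ts0 hs ws (tsum i 1 N) * Vvec N l ws a i m"
  proof (cases "m \<in> tuple_box N (\<lambda>_. 0) i")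
    case True
    then have "theta_seq ts0 hs ws (tsum m 1 N) * Dcoef N l ws a m i
        + (\<Sum>p\<in>{1..N}. xi_star N l hs ws a m p * Dcoef N l ws a (tuple_incr m p) i)
        = theta_seq ts0 hs ws (tsum i 1 N) * Dcoef N l ws a m i"
      using D_prefactor_base_nonzero[OF ws_ok i_valid] by (intro Dcoef_incr_recurrence[OF i_valid])
    with True show ?thesis
      by (simp add: Astar_Vvec_apply_in_box[OF i_valid] Vvec_apply[OF i_valid])
  next
    case False
    then show ?thesis
      by (simp add: Astar_Vvec_apply_outside_box[OF i_valid] Vvec_apply[OF i_valid])
  qed
qed

end
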